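(* Let $H$ be the Torricelli trumpet of parameter $\beta>0$ (surface of revolution of $r(z)=z^{-\beta}$, $z\ge z_0$, with $r_0=r(z_0)$), with rotation function $\Delta\theta(\varphi_0)$. Let $\kappa(\varphi_0)=\Delta\theta'(\varphi_0)$ and $\omega(\varphi_0)=\frac{2+\kappa(\varphi_0)}{\cos\varphi_0}$. Then: 1. $\kappa$ is smooth on $(-\pi/2,\pi/2)\setminus\{0\}$, and for all such $\varphi_0$ $$\kappa(\varphi_0)\le-2\sqrt{1+\beta^{-2}r_0^{-2(1+\beta)/\beta}}<-2.$$ In particular $\kappa(\varphi_0)\notin[-2,0]$, and hence $\omega<0$. 2. $\kappa(\varphi_0)\to-\infty$ as $\varphi_0\to0$, and $\kappa(\varphi_0)\to-2\sqrt{1+\beta^{-2}r_0^{-2(1+\beta)/\beta}}$ as $\varphi_0\to\pm\pi/2$. 3. $|\kappa'(\varphi_0)|=O(|2+\kappa(\varphi_0)|^3)$ as $\varphi_0\to0$. 4. $\omega$ is monotone on one-sided neighborhoods $[-\varepsilon,0)$ and $(0,\varepsilon]$ of $0$, for some $\varepsilon>0$.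
   Context: The trumpet is the surface $(r(z)\cos\theta,r(z)\sin\theta,z)$, $z\ge z_0$. A unit-speed geodesic entering through the boundary circle at angular position $\theta_0$ with angle $\varphi_0$ to the inward meridian exits at position $\theta_0+\Delta\theta(\varphi_0)$. The rotation function $\Delta\theta(\varphi_0)=2\operatorname{sgn}(\varphi_0)\int_{|\sin\varphi_0|}^1\sqrt{\frac{1+r'(z(r_0|\sin\varphi_0|/u))^{-2}}{1-u^2}}\,du$ is odd in $\varphi_0$. *)

theory Defs
  imports "HOL-Analysis.Analysis" "HOL-Library.Landau_Symbols"
begin

text \<open>Rotation function of the trumpet surface of revolution of the profile r on [z0,\<infinity>),
  following the paper's formula: z is the inverse of r on [z0,\<infinity>), r0 = r z0, and
  r'(z)^{-2} is the inverse of the square of the derivative.\<close>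
definition rotation_fun :: "(real \<Rightarrow> real) \<Rightarrow> real \<Rightarrow> real \<Rightarrow> real" where
  "rotation_fun r z0 \<phi> =
     2 * sgn \<phi> * integral {\<bar>sin \<phi>\<bar>..1}
       (\<lambda>u. sqrt ((1 + inverse ((deriv r (inv_into {z0..} r (r z0 * \<bar>sin \<phi>\<bar> / u)))\<^sup>2))
                   / (1 - u\<^sup>2)))"

definition smooth_on :: "real set \<Rightarrow> (real \<Rightarrow> real) \<Rightarrow> bool" where
  "smooth_on S f \<longleftrightarrow> (\<forall>n. \<forall>x\<in>S. ((deriv ^^ n) f) differentiable (at x))"

end

theory Submission
  imports Defs
begin

text \<open>
  Substituting \<open>u = sin \<psi>\<close> and using \<open>r'(z(y))\<^sup>-\<^sup>2 = \<beta>\<^sup>-\<^sup>2 y\<^sup>-\<^sup>p\<close> with \<open>p = 2(1+\<beta>)/\<beta>\<close>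
  turns the rotation function into \<open>\<Delta>\<theta>(\<phi>) = 2 sgn \<phi> J 0 (1/2) \<bar>\<phi>\<bar>\<close>, where
  \<open>J k e \<phi> = \<integral>\<^sub>\<phi>\<^sup>\<pi>\<^sup>/\<^sup>2 sin\<^sup>k \<psi> (1 + scale \<phi> sin\<^sup>p \<psi>)\<^sup>e d\<psi>\<close> and \<open>scale \<phi> = c sin\<^sup>-\<^sup>p \<phi>\<close>.
  Differentiating under the integral sign sends \<open>J k e\<close> to \<open>J (k+p) (e-1)\<close> plus elementary
  terms, so on \<open>(0, \<pi>/2)\<close> one gets \<open>\<kappa> = M scale' - 2\<surd>(1+c)\<close> with \<open>M = J p (-1/2)\<close>, and all
  derivatives of \<open>\<kappa>\<close> stay in the algebra generated by the \<open>J k e\<close> and elementary functions,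
  which gives smoothness; \<open>\<kappa>\<close> is even.

  Since \<open>scale' < 0\<close>, the excess \<open>-M scale'\<close> is nonnegative, whence \<open>\<kappa> \<le> -2\<surd>(1+c)\<close>, and
  it carries a factor \<open>cos \<phi>\<close>, whence the limits at \<open>\<pm>\<pi>/2\<close>. Near \<open>0\<close> the integral \<open>M\<close> is
  comparable to \<open>1/Q\<close> with \<open>Q = sin\<^sup>-\<^sup>p\<^sup>/\<^sup>2 \<phi>\<close>, so the excess is of order \<open>Q / sin \<phi>\<close> while
  \<open>\<kappa>'\<close> is at most of order \<open>Q / sin\<^sup>2 \<phi>\<close>: this gives \<open>\<kappa> \<rightarrow> -\<infinity>\<close>, the bound
  \<open>\<kappa>' = O(\<bar>2 + \<kappa>\<bar>\<^sup>3)\<close>, and positivity of the numerator \<open>\<kappa>' cos \<phi> + (2 + \<kappa>) sin \<phi>\<close>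
  of \<open>\<omega>'\<close>.
\<close>

section \<open>Infinitely differentiable functions\<close>

coinductive Cinf_on :: "real set \<Rightarrow> (real \<Rightarrow> real) \<Rightarrow> bool" for V where
  Cinf_onI: "(\<And>x. x \<in> V \<Longrightarrow> (f has_real_derivative f' x) (at x)) \<Longrightarrow> Cinf_on V f' \<Longrightarrow> Cinf_on V f"

lemma Cinf_on_has_derivative:
  "Cinf_on V f \<Longrightarrow> \<exists>f'. (\<forall>x\<in>V. (f has_real_derivative f' x) (at x)) \<and> Cinf_on V f'"
  by (cases rule: Cinf_on.cases) auto

text \<open>Closure properties of \<open>Cinf_on\<close> are proved by coinduction up to the algebra generated
  by the \<open>Cinf_on\<close> functions and a family \<open>P\<close> whose derivatives stay in that algebra.\<close>

inductive Cinf_alg :: "real set \<Rightarrow> ((real \<Rightarrow> real) \<Rightarrow> bool) \<Rightarrow> (real \<Rightarrow> real) \<Rightarrow> bool" for V P where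
  Cinf_alg_Cinf_on: "Cinf_on V f \<Longrightarrow> Cinf_alg V P f"
| Cinf_alg_gen: "P f \<Longrightarrow> Cinf_alg V P f"
| Cinf_alg_add: "Cinf_alg V P f \<Longrightarrow> Cinf_alg V P g \<Longrightarrow> Cinf_alg V P (\<lambda>x. f x + g x)"
| Cinf_alg_mult: "Cinf_alg V P f \<Longrightarrow> Cinf_alg V P g \<Longrightarrow> Cinf_alg V P (\<lambda>x. f x * g x)"

definition derivative_closed :: "real set \<Rightarrow> ((real \<Rightarrow> real) \<Rightarrow> bool) \<Rightarrow> bool" where
  "derivative_closed V P \<longleftrightarrow>
     (\<forall>f. P f \<longrightarrow> (\<exists>f'. (\<forall>x\<in>V. (f has_real_derivative f' x) (at x)) \<and> Cinf_alg V P f'))"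

lemma derivative_closedI:
  assumes "\<And>f. P f \<Longrightarrow> \<exists>f'. (\<forall>x\<in>V. (f has_real_derivative f' x) (at x)) \<and> Cinf_alg V P f'"
  shows "derivative_closed V P"
  using assms unfolding derivative_closed_def by blast

lemma Cinf_alg_has_derivative:
  assumes "derivative_closed V P" "Cinf_alg V P f"
  shows "\<exists>f'. (\<forall>x\<in>V. (f has_real_derivative f' x) (at x)) \<and> Cinf_alg V P f'"
  using assms(2)
proof (induction rule: Cinf_alg.induct)
  case (Cinf_alg_Cinf_on f)
  then show ?case by (blast dest: Cinf_on_has_derivative intro: Cinf_alg.Cinf_alg_Cinf_on)
next
  case (Cinf_alg_gen f)
  then show ?case using assms(1) unfolding derivative_closed_def by blast
next
  case (Cinf_alg_add f g)
  then obtain f' g' where "\<forall>x\<in>V. (f has_real_derivative f' x) (at x)" "Cinf_alg V P f'"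
    "\<forall>x\<in>V. (g has_real_derivative g' x) (at x)" "Cinf_alg V P g'" by blast
  then show ?case
    by (intro exI[of _ "\<lambda>x. f' x + g' x"]) (auto intro!: derivative_eq_intros Cinf_alg.Cinf_alg_add)
next
  case (Cinf_alg_mult f g)
  then obtain f' g' where "\<forall>x\<in>V. (f has_real_derivative f' x) (at x)" "Cinf_alg V P f'"
    "\<forall>x\<in>V. (g has_real_derivative g' x) (at x)" "Cinf_alg V P g'" by blast
  with Cinf_alg_mult.hyps show ?case
    by (intro exI[of _ "\<lambda>x. f' x * g x + f x * g' x"])
       (auto intro!: derivative_eq_intros Cinf_alg.Cinf_alg_add Cinf_alg.Cinf_alg_mult)
qed

lemma Cinf_alg_imp_Cinf_on:
  assumes "derivative_closed V P" "Cinf_alg V P f"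
  shows "Cinf_on V f"
  using assms(2)
proof (coinduction arbitrary: f rule: Cinf_on.coinduct)
  case (Cinf_on f)
  from Cinf_alg_has_derivative[OF assms(1) this] show ?case by blast
qed

lemma Cinf_on_generated:
  assumes "derivative_closed V P" "P f"
  shows "Cinf_on V f"
  using assms by (blast intro: Cinf_alg_imp_Cinf_on Cinf_alg_gen)

lemma Cinf_on_const [simp]: "Cinf_on V (\<lambda>x. k)"
  by (rule Cinf_on_generated[of V "\<lambda>f. \<exists>k. f = (\<lambda>x. k)"])
     (auto intro!: derivative_closedI exI[of _ "\<lambda>x. 0"] Cinf_alg_gen)

lemma Cinf_on_add: "Cinf_on V f \<Longrightarrow> Cinf_on V g \<Longrightarrow> Cinf_on V (\<lambda>x. f x + g x)"
  by (rule Cinf_alg_imp_Cinf_on[of V "\<lambda>_. False"])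
     (auto simp: derivative_closed_def intro: Cinf_alg.intros)

lemma Cinf_on_mult: "Cinf_on V f \<Longrightarrow> Cinf_on V g \<Longrightarrow> Cinf_on V (\<lambda>x. f x * g x)"
  by (rule Cinf_alg_imp_Cinf_on[of V "\<lambda>_. False"])
     (auto simp: derivative_closed_def intro: Cinf_alg.intros)

lemma Cinf_on_diff: "Cinf_on V f \<Longrightarrow> Cinf_on V g \<Longrightarrow> Cinf_on V (\<lambda>x. f x - g x)"
  using Cinf_on_add[OF _ Cinf_on_mult[OF Cinf_on_const[of V "-1"]]] by simp

lemma
  shows Cinf_on_sin: "Cinf_on V sin" and Cinf_on_cos: "Cinf_on V cos"
proof -
  let ?P = "\<lambda>f::real \<Rightarrow> real. f = sin \<or> f = cos"
  have closed: "derivative_closed V ?P"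
  proof (rule derivative_closedI)
    fix f assume "?P f"
    then show "\<exists>f'. (\<forall>x\<in>V. (f has_real_derivative f' x) (at x)) \<and> Cinf_alg V ?P f'"
    proof
      assume "f = sin"
      moreover have "Cinf_alg V ?P cos" by (rule Cinf_alg_gen) simp
      ultimately show ?thesis using DERIV_sin by (intro exI[of _ cos]) simp
    next
      assume "f = cos"
      moreover have "Cinf_alg V ?P (\<lambda>x. (-1) * sin x)"
        by (rule Cinf_alg_mult[OF Cinf_alg_Cinf_on[OF Cinf_on_const] Cinf_alg_gen]) simp
      moreover have "(cos has_real_derivative (-1) * sin x) (at x)" for x
        using DERIV_cos by simp
      ultimately show ?thesis by (intro exI[of _ "\<lambda>x. (-1) * sin x"]) simp
    qed
  qed
  show "Cinf_on V sin" "Cinf_on V cos" by (rule Cinf_on_generated[OF closed], simp)+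
qed

lemma Cinf_on_powr:
  assumes "V \<subseteq> {0<..}"
  shows "Cinf_on V (\<lambda>x. x powr a)"
proof -
  let ?P = "\<lambda>f. \<exists>a. f = (\<lambda>x::real. x powr a)"
  have "derivative_closed V ?P"
  proof (rule derivative_closedI)
    fix f assume "?P f"
    then obtain a where f: "f = (\<lambda>x. x powr a)" by blast
    have "Cinf_alg V ?P (\<lambda>x. a * x powr (a - 1))"
      by (rule Cinf_alg_mult[OF Cinf_alg_Cinf_on[OF Cinf_on_const] Cinf_alg_gen]) blast
    moreover have "\<forall>x\<in>V. (f has_real_derivative a * x powr (a - 1)) (at x)"
      using assms f by (auto intro!: derivative_eq_intros)
    ultimately show "\<exists>f'. (\<forall>x\<in>V. (f has_real_derivative f' x) (at x)) \<and> Cinf_alg V ?P f'"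
      by (intro exI[of _ "\<lambda>x. a * x powr (a - 1)"]) simp
  qed
  then show ?thesis by (rule Cinf_on_generated) blast
qed

lemma Cinf_on_compose:
  assumes f: "Cinf_on V f" and g: "Cinf_on W g" and "f ` V \<subseteq> W"
  shows "Cinf_on V (\<lambda>x. g (f x))"
proof -
  let ?P = "\<lambda>h. \<exists>g. Cinf_on W g \<and> h = (\<lambda>x. g (f x))"
  have "derivative_closed V ?P"
  proof (rule derivative_closedI)
    fix h assume "?P h"
    then obtain g where g: "Cinf_on W g" and h: "h = (\<lambda>x. g (f x))" by blast
    obtain g' where g': "\<forall>y\<in>W. (g has_real_derivative g' y) (at y)" "Cinf_on W g'"
      using Cinf_on_has_derivative[OF g] by blast
    obtain f' where f': "\<forall>x\<in>V. (f has_real_derivative f' x) (at x)" "Cinf_on V f'"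
      using Cinf_on_has_derivative[OF f] by blast
    have "Cinf_alg V ?P (\<lambda>x. g' (f x) * f' x)"
      using g' f' by (intro Cinf_alg_mult[OF Cinf_alg_gen Cinf_alg_Cinf_on]) auto
    moreover have "\<forall>x\<in>V. (h has_real_derivative g' (f x) * f' x) (at x)"
      using g'(1) f'(1) assms(3) h by (auto intro!: DERIV_chain2[where f=g and g=f])
    ultimately show "\<exists>h'. (\<forall>x\<in>V. (h has_real_derivative h' x) (at x)) \<and> Cinf_alg V ?P h'"
      by (intro exI[of _ "\<lambda>x. g' (f x) * f' x"]) simp
  qed
  then show ?thesis by (rule Cinf_on_generated) (use g in blast)
qed

lemma Cinf_on_cong:
  assumes "open V" "Cinf_on V f" "\<And>x. x \<in> V \<Longrightarrow> g x = f x"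
  shows "Cinf_on V g"
proof -
  obtain f' where f': "\<forall>x\<in>V. (f has_real_derivative f' x) (at x)" "Cinf_on V f'"
    using Cinf_on_has_derivative[OF assms(2)] by blast
  have "(g has_real_derivative f' x) (at x)" if "x \<in> V" for x
    by (rule has_field_derivative_transform_within_open[where f=f, OF _ assms(1) that])
       (use f' that assms(3) in auto)
  then show ?thesis using f'(2) by (rule Cinf_onI)
qed

lemma Cinf_on_deriv:
  assumes "open V" "Cinf_on V f"
  shows "Cinf_on V (deriv f)"
proof -
  obtain f' where f': "\<forall>x\<in>V. (f has_real_derivative f' x) (at x)" "Cinf_on V f'"
    using Cinf_on_has_derivative[OF assms(2)] by blast
  show ?thesis using f' by (intro Cinf_on_cong[OF assms(1) f'(2)]) (auto intro: DERIV_imp_deriv)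
qed

lemma Cinf_on_imp_smooth_on:
  assumes "open V" "Cinf_on V f"
  shows "smooth_on V f"
proof -
  have "Cinf_on V ((deriv ^^ n) f)" for n
    by (induction n) (simp_all add: assms Cinf_on_deriv)
  then show ?thesis
    unfolding smooth_on_def
    using Cinf_on_has_derivative real_differentiable_def by blast
qed

lemma has_real_derivative_sgn_abs:
  fixes x :: real
  assumes "x \<noteq> 0"
  shows "(sgn has_real_derivative 0) (at x)" and "(abs has_real_derivative sgn x) (at x)"
proof -
  define U where "U = (if x > 0 then {0<..} else {..<0::real})"
  have U: "open U" "x \<in> U" and sgn_U: "\<And>y. y \<in> U \<Longrightarrow> sgn y = sgn x"
    using assms by (auto simp: U_def sgn_if split: if_splits)
  show "(sgn has_real_derivative 0) (at x)"
  proof (rule has_field_derivative_transform_within_open[OF DERIV_const U])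
    show "sgn x = sgn y" if "y \<in> U" for y
      using sgn_U[OF that] by simp
  qed
  have "((\<lambda>y. sgn x * y) has_real_derivative sgn x) (at x)"
    using DERIV_cmult[OF DERIV_ident] by simp
  then show "(abs has_real_derivative sgn x) (at x)"
  proof (rule has_field_derivative_transform_within_open[OF _ U])
    show "sgn x * y = \<bar>y\<bar>" if "y \<in> U" for y
      using sgn_U[OF that] by (simp add: abs_sgn)
  qed
qed

lemma Cinf_on_abs:
  assumes "0 \<notin> V"
  shows "Cinf_on V abs"
proof -
  have nz: "x \<noteq> 0" if "x \<in> V" for x
    using assms that by auto
  have "Cinf_on V sgn"
    using Cinf_onI[OF has_real_derivative_sgn_abs(1)[OF nz] Cinf_on_const] .
  then show ?thesis
    using Cinf_onI[OF has_real_derivative_sgn_abs(2)[OF nz]] by blast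
qed

lemma sin_gt_zero_between: "0 < a \<Longrightarrow> a \<le> x \<Longrightarrow> x \<le> pi/2 \<Longrightarrow> 0 < sin x"
  by (rule sin_gt_zero) (auto intro: less_le_trans le_less_trans[of _ "pi/2"])

lemma sin_neq_zero_between: "0 < a \<Longrightarrow> a \<le> x \<Longrightarrow> x * 2 \<le> pi \<Longrightarrow> sin x \<noteq> 0"
  using sin_gt_zero_between[of a x] by auto

lemma sin_cos_bounds:
  assumes "\<phi> \<in> {0<..<pi/2}"
  shows "0 < sin \<phi>" "sin \<phi> \<le> 1" "0 < cos \<phi>" "cos \<phi> \<le> 1"
  using assms by (auto intro: sin_gt_zero cos_gt_zero_pi)

lemma abs_sin_eq_sin_abs:
  assumes "\<bar>\<phi>\<bar> \<le> pi"
  shows "\<bar>sin \<phi>\<bar> = sin \<bar>\<phi>\<bar>"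
proof (cases "0 \<le> \<phi>")
  case True
  then show ?thesis using assms sin_ge_zero[of \<phi>] by simp
next
  case False
  then show ?thesis using assms sin_ge_zero[of "-\<phi>"] by simp
qed

lemma one_plus_mult_powr_neq_zero: "(X::real) \<ge> 0 \<Longrightarrow> 1 + X * s powr q \<noteq> 0"
  using add_pos_nonneg[of 1 "X * s powr q"] by simp

lemma sqrt_weight_bounds:
  fixes t X :: real
  assumes t: "0 < t" "t \<le> 1" and X: "X \<ge> 0"
  shows "X * (t * t / ((1 + X * t) * sqrt (1 + X * t))) \<le> t / sqrt (1 + X * t)"
    and "X > 0 \<Longrightarrow> t / sqrt (1 + X * t) \<le> 1 / sqrt X"
    and "0 < m \<Longrightarrow> m \<le> t \<Longrightarrow> m / sqrt (1 + X) \<le> t / sqrt (1 + X * t)"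
proof -
  define B where "B = 1 + X * t"
  have "X * t \<le> X" using t X by (simp add: mult_left_le)
  then have B: "B > 0" "X * t \<le> B" "B \<le> 1 + X"
    unfolding B_def using t X by (auto intro: add_pos_nonneg)
  have "X * (t * t / (B * sqrt B)) = (X * t) * (t / (B * sqrt B))" by simp
  also have "\<dots> \<le> B * (t / (B * sqrt B))" using B t by (intro mult_right_mono) auto
  also have "\<dots> = t / sqrt B" using B by simp
  finally show "X * (t * t / ((1 + X * t) * sqrt (1 + X * t))) \<le> t / sqrt (1 + X * t)"
    unfolding B_def .
  show "t / sqrt (1 + X * t) \<le> 1 / sqrt X" if X0: "X > 0"
  proof -
    have "t * t * X \<le> t * X" using t X0 by (intro mult_right_mono) (auto intro: mult_left_le)
    then have "sqrt (t * t * X) \<le> sqrt B" using B by (simp add: mult.commute)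
    then have "t * sqrt X \<le> sqrt B" using t X0 by (simp add: real_sqrt_mult)
    then show ?thesis unfolding B_def[symmetric] using B X0 by (simp add: field_simps)
  qed
  show "m / sqrt (1 + X) \<le> t / sqrt (1 + X * t)" if m: "0 < m" "m \<le> t"
  proof -
    have "m / sqrt (1 + X) \<le> m / sqrt B" using m B by (intro divide_left_mono) auto
    also have "\<dots> \<le> t / sqrt B" using m B by (intro divide_right_mono) auto
    finally show ?thesis unfolding B_def .
  qed
qed

lemma le_cube_of_bounds:
  fixes K K' q s x y :: real
  assumes "0 < K" "0 < K'" "1 \<le> q" "0 < s" "s \<le> 1" "K * q / s \<le> x" "y \<le> K' * q / s\<^sup>2"
  shows "y \<le> K' / K ^ 3 * x ^ 3"
proof -
  have "K ^ 3 * q / s\<^sup>2 \<le> (K * q / s) ^ 3"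
  proof -
    have "1 \<le> q * q / s" using assms mult_mono[of 1 q 1 q] by (simp add: le_divide_eq)
    then have "(K ^ 3 * q / s\<^sup>2) * 1 \<le> (K ^ 3 * q / s\<^sup>2) * (q * q / s)"
      using assms by (intro mult_left_mono) auto
    also have "\<dots> = (K * q / s) ^ 3"
      by (simp add: power_divide power_mult_distrib power3_eq_cube power2_eq_square)
    finally show ?thesis by simp
  qed
  also have "\<dots> \<le> x ^ 3" using assms by (intro power_mono) auto
  finally have "K' / K ^ 3 * (K ^ 3 * q / s\<^sup>2) \<le> K' / K ^ 3 * x ^ 3"
    using assms by (intro mult_left_mono) auto
  then show ?thesis using assms by simp
qed

section \<open>The rotation integral in the angle variable\<close>

lemma nn_integral_sin_substitution:
  fixes F :: "real \<Rightarrow> real"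
  assumes \<phi>: "0 < \<phi>" "\<phi> < pi/2"
    and F: "(\<lambda>u. F u * indicator {sin \<phi>..1} u) \<in> borel_measurable borel"
  shows "(\<integral>\<^sup>+u. ennreal (F u * indicator {sin \<phi>..1} u) \<partial>lborel)
    = (\<integral>\<^sup>+\<psi>. ennreal (F (sin \<psi>) * cos \<psi> * indicator {\<phi>..pi/2} \<psi>) \<partial>lborel)"
proof -
  have "(\<integral>\<^sup>+u. F u * indicator {sin \<phi>..sin (pi/2)} u \<partial>lborel)
      = (\<integral>\<^sup>+\<psi>. F (sin \<psi>) * cos \<psi> * indicator {\<phi>..pi/2} \<psi> \<partial>lborel)"
  proof (rule nn_integral_substitution)
    show "set_borel_measurable borel {sin \<phi>..sin (pi / 2)} F"
      using F unfolding set_borel_measurable_def by (simp add: mult.commute)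
    show "(sin has_real_derivative cos x) (at x)" for x by (rule DERIV_sin)
    show "continuous_on {\<phi>..pi/2} cos" by (intro continuous_intros)
    show "0 \<le> cos x" if "x \<in> {\<phi>..pi/2}" for x using that \<phi> by (intro cos_ge_zero) auto
  qed (use \<phi> in auto)
  then show ?thesis by simp
qed

lemma integral_sin_substitution:
  fixes A :: "real \<Rightarrow> real"
  assumes \<phi>: "0 < \<phi>" "\<phi> < pi/2"
    and A: "continuous_on {sin \<phi>..1} A" "\<And>u. u \<in> {sin \<phi>..1} \<Longrightarrow> 0 \<le> A u"
  shows "integral {sin \<phi>..1} (\<lambda>u. sqrt (A u / (1 - u\<^sup>2))) = integral {\<phi>..pi/2} (\<lambda>\<psi>. sqrt (A (sin \<psi>)))"
proof -
  define F where "F u = sqrt (A u / (1 - u\<^sup>2))" for u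
  define g where "g \<psi> = sqrt (A (sin \<psi>))" for \<psi>
  have sin_in: "sin \<psi> \<in> {sin \<phi>..1}" if "\<psi> \<in> {\<phi>..pi/2}" for \<psi>
    using that \<phi> by (auto intro!: sin_monotone_2pi_le)
  have "continuous_on {\<phi>..pi/2} g"
    unfolding g_def by (intro continuous_intros continuous_on_compose2[OF A(1)]) (use sin_in in auto)
  then have g_int: "(g has_integral integral {\<phi>..pi/2} g) {\<phi>..pi/2}"
    by (intro integrable_integral integrable_continuous_real)
  have g_nonneg: "g \<psi> \<ge> 0" if "\<psi> \<in> {\<phi>..pi/2}" for \<psi>
    using A(2)[OF sin_in[OF that]] by (simp add: g_def)
  have F_nonneg: "F u * indicator {sin \<phi>..1} u \<ge> 0" for u
    using A(2)[of u] sin_gt_zero[of \<phi>] \<phi> abs_le_square_iff[of u 1] by (auto simp: F_def indicator_def)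
  have eq: "(\<lambda>u. F u * indicator {sin \<phi>..1} u)
      = (\<lambda>u. sqrt ((indicator {sin \<phi>..1} u *\<^sub>R A u) / (1 - u\<^sup>2)))"
    by (auto simp: F_def fun_eq_iff indicator_def)
  have "(\<lambda>u. indicator {sin \<phi>..1} u *\<^sub>R A u) \<in> borel_measurable borel"
    using A(1) by (intro borel_measurable_continuous_on_indicator) auto
  then have F_meas: "(\<lambda>u. F u * indicator {sin \<phi>..1} u) \<in> borel_measurable borel"
    unfolding eq by measurable
  have Fg: "F (sin \<psi>) * cos \<psi> = g \<psi>" if "\<psi> \<in> {\<phi>..<pi/2}" for \<psi>
  proof -
    have "cos \<psi> > 0" using that \<phi> by (intro cos_gt_zero_pi) auto
    then show ?thesis by (simp add: F_def g_def real_sqrt_divide cos_squared_eq[symmetric])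
  qed
  have "AE \<psi> in lborel. ennreal (F (sin \<psi>) * cos \<psi> * indicator {\<phi>..pi/2} \<psi>)
      = ennreal (g \<psi>) * indicator {\<phi>..pi/2} \<psi>"
    using AE_lborel_singleton[of "pi/2"] by eventually_elim (auto simp: indicator_def Fg)
  then have "(\<integral>\<^sup>+u. ennreal (F u * indicator {sin \<phi>..1} u) \<partial>lborel) = ennreal (integral {\<phi>..pi/2} g)"
    using nn_integral_sin_substitution[OF \<phi> F_meas] nn_integral_has_integral_lebesgue'[OF g_nonneg g_int]
    by (simp add: nn_integral_cong_AE)
  from nn_integral_has_integral[OF F_meas F_nonneg this has_integral_nonneg[OF g_int g_nonneg]]
  have "((\<lambda>u. if u \<in> {sin \<phi>..1} then F u else 0) has_integral integral {\<phi>..pi/2} g) UNIV"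
    by (simp add: indicator_def of_bool_def if_distrib cong: if_cong)
  then have "(F has_integral integral {\<phi>..pi/2} g) {sin \<phi>..1}"
    by (rule has_integral_restrict_UNIV[THEN iffD1])
  then show ?thesis unfolding F_def g_def by (rule integral_unique)
qed

lemma inverse_deriv_sq_at_inv_into_powr:
  fixes \<beta> z0 y :: real
  assumes \<beta>: "\<beta> > 0" and z0: "z0 > 0" and y: "0 < y" "y \<le> z0 powr (-\<beta>)"
  shows "inverse ((deriv (\<lambda>z. z powr (-\<beta>)) (inv_into {z0..} (\<lambda>z. z powr (-\<beta>)) y))\<^sup>2)
         = \<beta> powr (-2) * y powr (- (2 * (1 + \<beta>) / \<beta>))"
proof -
  define r where "r = (\<lambda>z::real. z powr (-\<beta>))"
  define z where "z = y powr (-1/\<beta>)"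
  have z_pos: "z > 0" using y by (simp add: z_def)
  have "z \<ge> (z0 powr (-\<beta>)) powr (-1/\<beta>)"
    unfolding z_def using y \<beta> by (intro powr_mono2') auto
  then have "z \<ge> z0" using z0 \<beta> by (simp add: powr_powr)
  moreover have "r z = y" using y \<beta> by (simp add: r_def z_def powr_powr)
  moreover have "inj_on r {z0..}"
    by (rule inj_on_inverseI[where g="\<lambda>y. y powr (-1/\<beta>)"]) (use z0 \<beta> in \<open>auto simp: r_def powr_powr\<close>)
  ultimately have inv: "inv_into {z0..} r y = z"
    by (intro inv_into_f_eq) auto
  have "(r has_real_derivative (-\<beta>) * z powr (-\<beta> - 1)) (at z)"
    unfolding r_def using z_pos by (auto intro!: derivative_eq_intros)
  then have "deriv r z = (-\<beta>) * z powr (-\<beta> - 1)" by (rule DERIV_imp_deriv)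
  then have "inverse ((deriv r z)\<^sup>2) = inverse (\<beta>\<^sup>2) * inverse ((z powr (-\<beta> - 1))\<^sup>2)"
    by (simp add: power_mult_distrib)
  also have "inverse (\<beta>\<^sup>2) = \<beta> powr (-2)"
    using \<beta> by (simp add: powr_minus powr_realpow)
  also have "inverse ((z powr (-\<beta> - 1))\<^sup>2) = z powr (2*\<beta> + 2)"
    using z_pos by (simp add: powr_minus[symmetric] powr_realpow[symmetric] powr_powr algebra_simps)
  also have "z powr (2*\<beta> + 2) = y powr (- (2 * (1 + \<beta>) / \<beta>))"
    unfolding z_def using y \<beta> by (simp add: powr_powr field_simps)
  finally show ?thesis unfolding r_def[symmetric] inv .
qed

section \<open>The integrals \<open>J k e\<close> and their derivatives\<close>

locale trumpet_integrals =
  fixes c p :: real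
  assumes c_pos: "c > 0" and p_pos: "p > 0"
begin

definition integrand :: "real \<Rightarrow> real \<Rightarrow> real \<Rightarrow> real \<Rightarrow> real" where
  "integrand k e X \<psi> = sin \<psi> powr k * (1 + X * sin \<psi> powr p) powr e"

definition scale :: "real \<Rightarrow> real" where
  "scale \<phi> = c * sin \<phi> powr (-p)"

definition scale' :: "real \<Rightarrow> real" where
  "scale' \<phi> = - p * c * sin \<phi> powr (- p - 1) * cos \<phi>"

definition J :: "real \<Rightarrow> real \<Rightarrow> real \<Rightarrow> real" where
  "J k e \<phi> = integral {\<phi>..pi/2} (integrand k e (scale \<phi>))"

lemma continuous_on_integrand:
  assumes "0 < a"
  shows "continuous_on ({0<..} \<times> {a..pi/2}) (\<lambda>(X, \<psi>). integrand k e X \<psi>)"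
  unfolding integrand_def case_prod_beta'
  using assms by (intro continuous_intros) (auto simp: sin_neq_zero_between one_plus_mult_powr_neq_zero)

lemma continuous_on_integrand_fixed:
  assumes "0 < a" "X \<ge> 0"
  shows "continuous_on {a..pi/2} (integrand k e X)"
  unfolding integrand_def
  using assms by (intro continuous_intros) (auto simp: sin_neq_zero_between one_plus_mult_powr_neq_zero)

lemma has_real_derivative_integrand_param:
  assumes "0 < sin \<psi>" "X > 0"
  shows "((\<lambda>X. integrand k e X \<psi>) has_real_derivative e * integrand (k + p) (e - 1) X \<psi>) (at X)"
proof -
  have "1 + X * sin \<psi> powr p > 0" using assms by (simp add: add_pos_pos)
  then have "((\<lambda>X. integrand k e X \<psi>) has_real_derivative
      sin \<psi> powr k * (e * (1 + X * sin \<psi> powr p) powr (e - 1) * sin \<psi> powr p)) (at X)"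
    unfolding integrand_def by (auto intro!: derivative_eq_intros)
  then show ?thesis
    using assms by (simp add: integrand_def powr_add ac_simps)
qed

lemma has_real_derivative_integral_param_X:
  assumes X: "X > 0" and a: "0 < a"
  shows "((\<lambda>X. integral {a..pi/2} (integrand k e X)) has_real_derivative
    e * integral {a..pi/2} (integrand (k + p) (e - 1) X)) (at X within {0<..})"
proof -
  have "((\<lambda>X. integral (cbox a (pi/2)) (integrand k e X)) has_field_derivative
      integral (cbox a (pi/2)) (\<lambda>\<psi>. e * integrand (k + p) (e - 1) X \<psi>)) (at X within {0<..})"
  proof (rule leibniz_rule_field_derivative)
    show "((\<lambda>X. integrand k e X \<psi>) has_field_derivative e * integrand (k + p) (e - 1) X' \<psi>)
        (at X' within {0<..})" if "X' \<in> {0<..}" "\<psi> \<in> cbox a (pi/2)" for X' \<psi>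
      using that a sin_gt_zero_between[of a \<psi>]
      by (intro has_field_derivative_at_within[OF has_real_derivative_integrand_param]) auto
    show "integrand k e X' integrable_on cbox a (pi/2)" if "X' \<in> {0<..}" for X'
      using that a by (auto intro!: integrable_continuous_interval continuous_on_integrand_fixed)
    show "continuous_on ({0<..} \<times> cbox a (pi/2)) (\<lambda>(X, \<psi>). e * integrand (k + p) (e - 1) X \<psi>)"
      using continuous_on_mult[OF continuous_on_const continuous_on_integrand[OF a, of "k + p" "e - 1"], of e]
      by (simp add: case_prod_beta')
  qed (use X in auto)
  then show ?thesis by simp
qed

lemma has_derivative_integral_param:
  assumes X: "X > 0" and a: "0 < a" "a < pi/2"
  shows "((\<lambda>(X, a). integral {a..pi/2} (integrand k e X)) has_derivative
     (\<lambda>(dX, da). e * integral {a..pi/2} (integrand (k + p) (e - 1) X) * dX - integrand k e X a * da))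
     (at (X, a))"
proof -
  let ?A = "{0<..<pi/2::real}"
  have d_X: "((\<lambda>X. integral {a..pi/2} (integrand k e X)) has_derivative
      (*) (e * integral {a..pi/2} (integrand (k + p) (e - 1) X))) (at X within {0<..})"
    using has_real_derivative_integral_param_X[OF X a(1)] by (simp add: has_field_derivative_def)
  have d_a: "((\<lambda>a. integral {a..pi/2} (integrand k e X')) has_derivative
      blinfun_apply (blinfun_mult_right (- integrand k e X' a'))) (at a' within ?A)"
    if "X' \<in> {0<..}" "a' \<in> ?A" for X' a'
  proof -
    have "((\<lambda>a. integral {a..pi/2} (integrand k e X')) has_real_derivative - integrand k e X' a')
        (at a' within {a'/2..pi/2})"
      using that by (intro integral_has_real_derivative' continuous_on_integrand_fixed) auto
    moreover have "at a' within {a'/2..pi/2} = at a'"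
      using that by (intro at_within_Icc_at) auto
    ultimately show ?thesis
      by (auto simp: has_field_derivative_def intro: has_derivative_at_withinI)
  qed
  have "continuous_on ({0<..} \<times> ?A) (\<lambda>(X, a). blinfun_mult_right (- integrand k e X a))"
    unfolding case_prod_beta' integrand_def
    by (intro bounded_linear.continuous_on[OF bounded_linear_blinfun_mult_right] continuous_intros)
       (auto simp: one_plus_mult_powr_neq_zero sin_gt_zero less_imp_neq[symmetric])
  then have "continuous (at (X, a) within {0<..} \<times> ?A) (\<lambda>(X, a). blinfun_mult_right (- integrand k e X a))"
    using X a by (simp add: continuous_on_eq_continuous_within)
  from has_derivative_partialsI[OF d_X d_a this] X a
  have "((\<lambda>(X, a). integral {a..pi/2} (integrand k e X)) has_derivative
      (\<lambda>(dX, da). e * integral {a..pi/2} (integrand (k + p) (e - 1) X) * dX - integrand k e X a * da))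
      (at (X, a) within {0<..} \<times> ?A)"
    by (simp add: convex_real_interval)
  moreover have "at (X, a) within {0<..} \<times> ?A = at (X, a)"
    using X a by (intro at_within_open) (auto intro: open_Times)
  ultimately show ?thesis by simp
qed

lemma scale_pos: "0 < sin \<phi> \<Longrightarrow> 0 < scale \<phi>"
  using c_pos by (simp add: scale_def)

lemma scale_pos_between: "\<phi> \<in> {0<..<pi/2} \<Longrightarrow> 0 < scale \<phi>"
  using scale_pos sin_gt_zero by auto

lemma has_real_derivative_scale:
  assumes "0 < sin \<phi>"
  shows "(scale has_real_derivative scale' \<phi>) (at \<phi>)"
  unfolding scale_def scale'_def using assms by (auto intro!: derivative_eq_intros)

lemma has_real_derivative_J:
  assumes \<phi>: "\<phi> \<in> {0<..<pi/2}"
  shows "(J k e has_real_derivative e * J (k + p) (e - 1) \<phi> * scale' \<phi> - integrand k e (scale \<phi>) \<phi>)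
    (at \<phi>)"
proof -
  have sin_pos: "0 < sin \<phi>" using \<phi> by (intro sin_gt_zero) auto
  have "((\<lambda>\<phi>. (scale \<phi>, \<phi>)) has_derivative (\<lambda>h. (scale' \<phi> * h, h))) (at \<phi>)"
    using has_real_derivative_scale[OF sin_pos]
    by (auto intro!: derivative_eq_intros simp: has_field_derivative_def mult.commute)
  from has_derivative_compose[OF this has_derivative_integral_param[OF scale_pos[OF sin_pos]]] \<phi>
  have "(J k e has_derivative (\<lambda>h. e * J (k + p) (e - 1) \<phi> * (scale' \<phi> * h)
      - integrand k e (scale \<phi>) \<phi> * h)) (at \<phi>)"
    by (simp add: J_def[abs_def])
  then show ?thesis unfolding has_field_derivative_def
    by (rule has_derivative_eq_rhs) (auto simp: algebra_simps)
qed

lemma integrand_diagonal: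
  "0 < sin \<phi> \<Longrightarrow> integrand k e (scale \<phi>) \<phi> = sin \<phi> powr k * (1 + c) powr e"
  by (simp add: integrand_def scale_def mult.assoc powr_add[symmetric])

lemma Cinf_on_sin_powr: "Cinf_on {0<..<pi/2} (\<lambda>\<phi>. sin \<phi> powr a)"
  by (rule Cinf_on_compose[OF Cinf_on_sin Cinf_on_powr[of "{0<..}"]]) (auto intro: sin_gt_zero)

lemma Cinf_on_scale': "Cinf_on {0<..<pi/2} scale'"
  unfolding scale'_def
  by (intro Cinf_on_mult Cinf_on_const Cinf_on_sin_powr Cinf_on_cos)

lemma Cinf_on_J: "Cinf_on {0<..<pi/2} (J k e)"
proof -
  let ?V = "{0<..<pi/2::real}"
  let ?P = "\<lambda>f. \<exists>k e. f = J k e"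
  have "derivative_closed ?V ?P"
  proof (rule derivative_closedI)
    fix f assume "?P f"
    then obtain k e where f: "f = J k e" by blast
    define f' where "f' \<phi> = (e * J (k + p) (e - 1) \<phi>) * scale' \<phi> + (-1) * (sin \<phi> powr k * (1 + c) powr e)"
      for \<phi>
    have "Cinf_alg ?V ?P (\<lambda>\<phi>. e * J (k + p) (e - 1) \<phi>)"
      by (rule Cinf_alg_mult[OF Cinf_alg_Cinf_on[OF Cinf_on_const] Cinf_alg_gen]) blast
    then have "Cinf_alg ?V ?P f'"
      unfolding f'_def
      by (rule Cinf_alg_add[OF Cinf_alg_mult[OF _ Cinf_alg_Cinf_on[OF Cinf_on_scale']] Cinf_alg_Cinf_on])
         (intro Cinf_on_mult Cinf_on_const Cinf_on_sin_powr)
    moreover have "(f has_real_derivative f' \<phi>) (at \<phi>)" if "\<phi> \<in> ?V" for \<phi>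
      using has_real_derivative_J[OF that, of k e] integrand_diagonal[of \<phi> k e] sin_gt_zero[of \<phi>] that
      by (simp add: f f'_def)
    ultimately show "\<exists>f'. (\<forall>\<phi>\<in>?V. (f has_real_derivative f' \<phi>) (at \<phi>)) \<and> Cinf_alg ?V ?P f'"
      by blast
  qed
  then show ?thesis by (rule Cinf_on_generated) blast
qed

definition M :: "real \<Rightarrow> real" where "M \<phi> = J p (-1/2) \<phi>"

definition N :: "real \<Rightarrow> real" where "N \<phi> = J (2 * p) (-3/2) \<phi>"

lemma integrand_sqrt_forms:
  assumes "0 < sin \<psi>" "X \<ge> 0"
  defines "t \<equiv> sin \<psi> powr p"
  shows "integrand p (-1/2) X \<psi> = t / sqrt (1 + X * t)"
    and "integrand (2 * p) (-3/2) X \<psi> = t * t / ((1 + X * t) * sqrt (1 + X * t))"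
proof -
  have B: "1 + X * t > 0" using assms by (simp add: add_pos_nonneg)
  have half: "(1 + X * t) powr (-(1/2)) = 1 / sqrt (1 + X * t)"
    using B by (simp add: powr_minus_divide powr_half_sqrt[symmetric])
  show "integrand p (-1/2) X \<psi> = t / sqrt (1 + X * t)"
    by (simp add: integrand_def t_def[symmetric] half)
  have "(1 + X * t) powr (-3/2) = (1 + X * t) powr (-1/2) / (1 + X * t)"
    using B powr_diff[of "1 + X * t" "-1/2" 1] by simp
  moreover have "sin \<psi> powr (2 * p) = t * t"
    unfolding t_def by (simp add: powr_add[symmetric])
  ultimately show "integrand (2 * p) (-3/2) X \<psi> = t * t / ((1 + X * t) * sqrt (1 + X * t))"
    by (simp add: integrand_def t_def[symmetric] half)
qed

lemma integrand_sqrt_forms_between: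
  assumes "\<phi> \<in> {0<..<pi/2}" "\<psi> \<in> {\<phi>..pi/2}"
  defines "t \<equiv> sin \<psi> powr p"
  shows "0 < t" "t \<le> 1"
    "integrand p (-1/2) (scale \<phi>) \<psi> = t / sqrt (1 + scale \<phi> * t)"
    "integrand (2 * p) (-3/2) (scale \<phi>) \<psi> = t * t / ((1 + scale \<phi> * t) * sqrt (1 + scale \<phi> * t))"
proof -
  have "0 < sin \<psi>" using assms by (intro sin_gt_zero_between[of \<phi>]) auto
  then show "0 < t" "t \<le> 1"
    unfolding t_def using p_pos powr_mono2[of p "sin \<psi>" 1] by auto
  show "integrand p (-1/2) (scale \<phi>) \<psi> = t / sqrt (1 + scale \<phi> * t)"
    "integrand (2 * p) (-3/2) (scale \<phi>) \<psi> = t * t / ((1 + scale \<phi> * t) * sqrt (1 + scale \<phi> * t))"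
    unfolding t_def
    using integrand_sqrt_forms[OF \<open>0 < sin \<psi>\<close> less_imp_le[OF scale_pos_between[OF assms(1)]]]
    by simp_all
qed

lemma integrand_M_nonneg:
  assumes "\<phi> \<in> {0<..<pi/2}" "\<psi> \<in> {\<phi>..pi/2}"
  shows "0 \<le> integrand p (-1/2) (scale \<phi>) \<psi>"
  using integrand_sqrt_forms_between[OF assms] scale_pos_between[OF assms(1)] by simp

lemma integrand_N_nonneg:
  assumes "\<phi> \<in> {0<..<pi/2}" "\<psi> \<in> {\<phi>..pi/2}"
  shows "0 \<le> integrand (2 * p) (-3/2) (scale \<phi>) \<psi>"
  using integrand_sqrt_forms_between[OF assms] scale_pos_between[OF assms(1)] by (simp add: add_pos_pos)

lemma integrable_integrand:
  "\<phi> \<in> {0<..<pi/2} \<Longrightarrow> integrand k e (scale \<phi>) integrable_on {\<phi>..pi/2}"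
  using scale_pos_between[of \<phi>]
  by (intro integrable_continuous_real continuous_on_integrand_fixed) auto

lemma M_nonneg: "\<phi> \<in> {0<..<pi/2} \<Longrightarrow> 0 \<le> M \<phi>"
  unfolding M_def J_def by (intro integral_nonneg integrable_integrand integrand_M_nonneg)

lemma N_nonneg: "\<phi> \<in> {0<..<pi/2} \<Longrightarrow> 0 \<le> N \<phi>"
  unfolding N_def J_def by (intro integral_nonneg integrable_integrand integrand_N_nonneg)

lemma scale_mult_N_le_M: assumes "\<phi> \<in> {0<..<pi/2}" shows "scale \<phi> * N \<phi> \<le> M \<phi>"
proof -
  have "scale \<phi> * N \<phi> = integral {\<phi>..pi/2} (\<lambda>\<psi>. scale \<phi> * integrand (2 * p) (-3/2) (scale \<phi>) \<psi>)"
    unfolding N_def J_def by simp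
  also have "\<dots> \<le> M \<phi>"
    unfolding M_def J_def
  proof (rule integral_le)
    fix \<psi> assume "\<psi> \<in> {\<phi>..pi/2}"
    from integrand_sqrt_forms_between[OF assms this] show "scale \<phi> * integrand (2 * p) (-3/2) (scale \<phi>) \<psi> \<le> integrand p (-1/2) (scale \<phi>) \<psi>"
      using sqrt_weight_bounds(1) scale_pos_between[OF assms] by simp
  qed (use integrable_integrand[OF assms] integrable_on_cmult_left[OF integrable_integrand[OF assms]] in auto)
  finally show ?thesis .
qed

lemma M_le: assumes "\<phi> \<in> {0<..<pi/2}" shows "M \<phi> \<le> (pi/2) / sqrt (scale \<phi>)"
proof -
  have "M \<phi> \<le> integral {\<phi>..pi/2} (\<lambda>\<psi>. 1 / sqrt (scale \<phi>))"
    unfolding M_def J_def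
  proof (rule integral_le)
    fix \<psi> assume "\<psi> \<in> {\<phi>..pi/2}"
    from integrand_sqrt_forms_between[OF assms this] show "integrand p (-1/2) (scale \<phi>) \<psi> \<le> 1 / sqrt (scale \<phi>)"
      using sqrt_weight_bounds(2) scale_pos_between[OF assms] by simp
  qed (use integrable_integrand[OF assms] in auto)
  also have "\<dots> = (pi/2 - \<phi>) / sqrt (scale \<phi>)" using assms by simp
  also have "\<dots> \<le> (pi/2) / sqrt (scale \<phi>)"
    using assms scale_pos_between[OF assms] by (intro divide_right_mono) auto
  finally show ?thesis .
qed

lemma M_ge:
  assumes \<phi>: "\<phi> \<in> {0<..<pi/2}" "\<phi> \<le> pi/4"
  shows "(pi/4) * (sin (pi/4) powr p / sqrt (1 + scale \<phi>)) \<le> M \<phi>"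
proof -
  let ?m = "sin (pi/4) powr p"
  have int: "integrand p (-1/2) (scale \<phi>) integrable_on {pi/4..pi/2}"
    by (rule integrable_on_subinterval[OF integrable_integrand[OF \<phi>(1)]]) (use \<phi> in auto)
  have "(pi/4) * (?m / sqrt (1 + scale \<phi>)) = integral {pi/4..pi/2} (\<lambda>\<psi>. ?m / sqrt (1 + scale \<phi>))"
    by simp
  also have "\<dots> \<le> integral {pi/4..pi/2} (integrand p (-1/2) (scale \<phi>))"
  proof (rule integral_le[OF _ int])
    fix \<psi> assume \<psi>: "\<psi> \<in> {pi/4..pi/2}"
    then have "\<psi> \<in> {\<phi>..pi/2}" using \<phi> by auto
    note integrand_sqrt_forms_between[OF \<phi>(1) this]
    moreover have "?m \<le> sin \<psi> powr p"
      using \<psi> p_pos by (intro powr_mono2 sin_monotone_2pi_le) (auto simp: sin_45)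
    ultimately show "?m / sqrt (1 + scale \<phi>) \<le> integrand p (-1/2) (scale \<phi>) \<psi>"
      using sqrt_weight_bounds(3) scale_pos_between[OF \<phi>(1)] by (simp add: sin_45)
  qed auto
  also have "\<dots> \<le> M \<phi>"
    unfolding M_def J_def
  proof (rule integral_subset_le)
    show "\<forall>\<psi>\<in>{\<phi>..pi/2}. 0 \<le> integrand p (-1/2) (scale \<phi>) \<psi>"
      using integrand_M_nonneg[OF \<phi>(1)] by blast
  qed (use \<phi> int integrable_integrand[OF \<phi>(1)] in auto)
  finally show ?thesis .
qed

definition kappa_pos :: "real \<Rightarrow> real" where
  "kappa_pos \<phi> = M \<phi> * scale' \<phi> - 2 * sqrt (1 + c)"

definition scale'' :: "real \<Rightarrow> real" where
  "scale'' \<phi> = p * c * sin \<phi> powr (-p) * ((p + 1) * (cos \<phi>)\<^sup>2 / (sin \<phi>)\<^sup>2 + 1)"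

definition kappa_pos' :: "real \<Rightarrow> real" where
  "kappa_pos' \<phi> = scale' \<phi> * (-(1/2) * N \<phi> * scale' \<phi> - sin \<phi> powr p / sqrt (1 + c)) + M \<phi> * scale'' \<phi>"

lemma has_real_derivative_two_J:
  assumes "\<phi> \<in> {0<..<pi/2}"
  shows "((\<lambda>\<phi>. 2 * J 0 (1/2) \<phi>) has_real_derivative kappa_pos \<phi>) (at \<phi>)"
proof -
  have "sin \<phi> > 0" using assms by (intro sin_gt_zero) auto
  then have "integrand 0 (1/2) (scale \<phi>) \<phi> = sqrt (1 + c)"
    using c_pos by (simp add: integrand_diagonal powr_half_sqrt add_pos_pos)
  then show ?thesis
    using DERIV_cmult[OF has_real_derivative_J[OF assms, of 0 "1/2"], of 2]
    by (simp add: kappa_pos_def M_def algebra_simps)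
qed

lemma has_real_derivative_M:
  assumes "\<phi> \<in> {0<..<pi/2}"
  shows "(M has_real_derivative -(1/2) * N \<phi> * scale' \<phi> - sin \<phi> powr p / sqrt (1 + c)) (at \<phi>)"
proof -
  have "sin \<phi> > 0" using assms by (intro sin_gt_zero) auto
  then have "integrand p (-1/2) (scale \<phi>) \<phi> = sin \<phi> powr p / sqrt (1 + c)"
    using c_pos by (simp add: integrand_diagonal powr_minus_divide powr_half_sqrt add_pos_pos)
  then show ?thesis
    using has_real_derivative_J[OF assms, of p "-1/2"]
    by (simp add: M_def[abs_def] N_def)
qed

lemma has_real_derivative_scale':
  assumes "0 < sin \<phi>"
  shows "(scale' has_real_derivative scale'' \<phi>) (at \<phi>)"
proof -
  have "sin \<phi> powr (- p - 2) = sin \<phi> powr (-p) / (sin \<phi>)\<^sup>2"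
    "sin \<phi> powr (- p - 1) = sin \<phi> powr (-p) / sin \<phi>"
    using assms by (simp_all add: powr_diff)
  then show ?thesis
    unfolding scale'_def[abs_def] using assms
    by (auto intro!: derivative_eq_intros simp: scale''_def field_simps power2_eq_square)
qed

lemma has_real_derivative_kappa_pos:
  assumes "\<phi> \<in> {0<..<pi/2}"
  shows "(kappa_pos has_real_derivative kappa_pos' \<phi>) (at \<phi>)"
proof -
  have "sin \<phi> > 0" using assms by (intro sin_gt_zero) auto
  then have "((\<lambda>\<phi>. M \<phi> * scale' \<phi> - 2 * sqrt (1 + c)) has_real_derivative
      (-(1/2) * N \<phi> * scale' \<phi> - sin \<phi> powr p / sqrt (1 + c)) * scale' \<phi> + M \<phi> * scale'' \<phi>) (at \<phi>)"
    by (auto intro!: derivative_eq_intros has_real_derivative_M[OF assms] has_real_derivative_scale')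
  then show ?thesis
    unfolding kappa_pos_def[abs_def] kappa_pos'_def by (simp add: algebra_simps)
qed

lemma Cinf_on_kappa_pos: "Cinf_on {0<..<pi/2} kappa_pos"
  unfolding kappa_pos_def[abs_def] M_def
  by (intro Cinf_on_diff Cinf_on_mult Cinf_on_J Cinf_on_scale' Cinf_on_const)

section \<open>Estimates for \<open>\<kappa>\<close> on \<open>(0, \<pi>/2)\<close>\<close>

definition Q :: "real \<Rightarrow> real" where "Q \<phi> = sqrt (sin \<phi> powr (-p))"

definition K0 :: real where "K0 = (pi/4) * (sin (pi/4) powr p / sqrt (1 + c))"
definition K1 :: real where "K1 = (pi/2) / sqrt c"
definition K2 :: real where "K2 = p * c * K0 / 2"
definition K3 :: real where "K3 = p * c / sqrt (1 + c) + K1 * p * c * (p + 2)"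

lemma K0_pos: "0 < K0" unfolding K0_def using c_pos by (simp add: sin_45)
lemma K1_pos: "0 < K1" unfolding K1_def using c_pos by simp
lemma K2_pos: "0 < K2" unfolding K2_def using K0_pos c_pos p_pos by simp
lemma K3_pos: "0 < K3" unfolding K3_def using K1_pos c_pos p_pos by (simp add: add_pos_pos)

lemma Q_sq: "0 < sin \<phi> \<Longrightarrow> (Q \<phi>)\<^sup>2 = sin \<phi> powr (-p)"
  by (simp add: Q_def)

lemma Q_sq_mult_sin_powr: "0 < sin \<phi> \<Longrightarrow> (Q \<phi>)\<^sup>2 * sin \<phi> powr p = 1"
  by (simp add: Q_sq powr_minus)

lemma Q_ge_one:
  assumes "\<phi> \<in> {0<..<pi/2}"
  shows "1 \<le> Q \<phi>"
proof -
  have "0 < sin \<phi>" "sin \<phi> \<le> 1" using sin_cos_bounds[OF assms] by auto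
  then have "sin \<phi> powr p \<le> 1" using p_pos powr_mono2[of p "sin \<phi>" 1] by simp
  then show ?thesis
    using \<open>0 < sin \<phi>\<close> by (simp add: Q_def powr_minus one_le_inverse_iff)
qed

lemma scale_eq_Q: "0 < sin \<phi> \<Longrightarrow> scale \<phi> = c * (Q \<phi>)\<^sup>2"
  by (simp add: scale_def Q_sq)

lemma scale'_eq_Q: "0 < sin \<phi> \<Longrightarrow> scale' \<phi> = - p * c * (Q \<phi>)\<^sup>2 * cos \<phi> / sin \<phi>"
  by (simp add: scale'_def Q_sq powr_diff)

lemma scale''_eq_Q: "0 < sin \<phi> \<Longrightarrow> scale'' \<phi> = p * c * (Q \<phi>)\<^sup>2 * ((p + 1) * (cos \<phi>)\<^sup>2 / (sin \<phi>)\<^sup>2 + 1)"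
  by (simp add: scale''_def Q_sq)

lemma M_le_Q:
  assumes "\<phi> \<in> {0<..<pi/2}"
  shows "M \<phi> \<le> K1 / Q \<phi>"
proof -
  have "0 < sin \<phi>" using sin_cos_bounds[OF assms] by auto
  then have "sqrt (scale \<phi>) = sqrt c * Q \<phi>"
    using c_pos by (simp add: scale_eq_Q real_sqrt_mult Q_def)
  then show ?thesis using M_le[OF assms] by (simp add: K1_def)
qed

lemma M_ge_Q:
  assumes "\<phi> \<in> {0<..<pi/2}" "\<phi> \<le> pi/4"
  shows "K0 / Q \<phi> \<le> M \<phi>"
proof -
  let ?m = "sin (pi/4) powr p"
  have "0 < sin \<phi>" using sin_cos_bounds[OF assms(1)] by auto
  have Q: "1 \<le> Q \<phi>" by (rule Q_ge_one[OF assms(1)])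
  have "1 + scale \<phi> \<le> (1 + c) * (Q \<phi>)\<^sup>2"
    using Q c_pos \<open>0 < sin \<phi>\<close> one_le_power[OF Q, of 2] by (simp add: scale_eq_Q algebra_simps)
  then have "sqrt (1 + scale \<phi>) \<le> sqrt ((1 + c) * (Q \<phi>)\<^sup>2)"
    by (rule real_sqrt_le_mono)
  also have "\<dots> = sqrt (1 + c) * Q \<phi>"
    using Q by (simp add: real_sqrt_mult)
  finally have "sqrt (1 + scale \<phi>) \<le> sqrt (1 + c) * Q \<phi>" .
  then have "?m / (sqrt (1 + c) * Q \<phi>) \<le> ?m / sqrt (1 + scale \<phi>)"
    using scale_pos_between[OF assms(1)] Q c_pos by (intro divide_left_mono) (auto simp: sin_45)
  then have "(pi/4) * (?m / (sqrt (1 + c) * Q \<phi>)) \<le> (pi/4) * (?m / sqrt (1 + scale \<phi>))"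
    by (rule mult_left_mono) simp
  then have "K0 / Q \<phi> \<le> (pi/4) * (?m / sqrt (1 + scale \<phi>))"
    by (simp add: K0_def)
  also have "\<dots> \<le> M \<phi>" by (rule M_ge[OF assms])
  finally show ?thesis .
qed

definition excess :: "real \<Rightarrow> real" where "excess \<phi> = - (M \<phi> * scale' \<phi>)"

lemma kappa_pos_eq_excess: "kappa_pos \<phi> = - excess \<phi> - 2 * sqrt (1 + c)"
  by (simp add: kappa_pos_def excess_def)

lemma excess_eq_Q:
  "0 < sin \<phi> \<Longrightarrow> excess \<phi> = p * c * (Q \<phi>)\<^sup>2 * cos \<phi> * M \<phi> / sin \<phi>"
  by (simp add: excess_def scale'_eq_Q)

lemma excess_nonneg: "\<phi> \<in> {0<..<pi/2} \<Longrightarrow> 0 \<le> excess \<phi>"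
  using sin_cos_bounds[of \<phi>] M_nonneg[of \<phi>] c_pos p_pos by (simp add: excess_eq_Q)

lemma excess_ge:
  assumes \<phi>: "\<phi> \<in> {0<..<pi/2}" "\<phi> \<le> pi/4"
  shows "K2 * Q \<phi> / sin \<phi> \<le> excess \<phi>"
proof -
  note trig = sin_cos_bounds[OF \<phi>(1)]
  have Q: "0 < Q \<phi>" using Q_ge_one[OF \<phi>(1)] by simp
  have "1/2 \<le> cos \<phi>"
  proof -
    have "cos (pi/4) \<le> cos \<phi>" using \<phi> by (intro cos_monotone_0_pi_le) auto
    moreover have "1/2 \<le> cos (pi/4)" by (simp add: cos_45)
    ultimately show ?thesis by linarith
  qed
  then have "p * c * (Q \<phi>)\<^sup>2 * (1/2) * (K0 / Q \<phi>) \<le> p * c * (Q \<phi>)\<^sup>2 * cos \<phi> * M \<phi>"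
    using M_ge_Q[OF \<phi>] K0_pos c_pos p_pos Q by (intro mult_mono mult_left_mono) auto
  moreover have "K2 * Q \<phi> = p * c * (Q \<phi>)\<^sup>2 * (1/2) * (K0 / Q \<phi>)"
    using Q by (simp add: K2_def power2_eq_square)
  ultimately have "K2 * Q \<phi> \<le> p * c * (Q \<phi>)\<^sup>2 * cos \<phi> * M \<phi>" by linarith
  from divide_right_mono[OF this, of "sin \<phi>"] show ?thesis
    using trig by (simp add: excess_eq_Q)
qed

lemma excess_le:
  assumes \<phi>: "\<phi> \<in> {0<..<pi/2}"
  shows "excess \<phi> \<le> p * c * K1 * Q \<phi> * cos \<phi> / sin \<phi>"
proof -
  note trig = sin_cos_bounds[OF \<phi>]
  have Q: "0 < Q \<phi>" using Q_ge_one[OF \<phi>] by simp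
  have "p * c * (Q \<phi>)\<^sup>2 * cos \<phi> * M \<phi> \<le> p * c * (Q \<phi>)\<^sup>2 * cos \<phi> * (K1 / Q \<phi>)"
    using M_le_Q[OF \<phi>] trig c_pos p_pos by (intro mult_left_mono) auto
  also have "\<dots> = p * c * K1 * Q \<phi> * cos \<phi>"
    using Q by (simp add: power2_eq_square)
  finally show ?thesis
    using trig by (simp add: excess_eq_Q divide_right_mono)
qed

lemma kappa_pos'_ge:
  assumes \<phi>: "\<phi> \<in> {0<..<pi/2}"
  shows "p * c * (Q \<phi>)\<^sup>2 * (cos \<phi>)\<^sup>2 / (sin \<phi>)\<^sup>2 * M \<phi> \<le> kappa_pos' \<phi>"
proof -
  note trig = sin_cos_bounds[OF \<phi>]
  define A where "A = p * c * (Q \<phi>)\<^sup>2 * (cos \<phi>)\<^sup>2 / (sin \<phi>)\<^sup>2"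
  have A: "0 \<le> A" using c_pos p_pos by (simp add: A_def)
  have "N \<phi> * (scale' \<phi>)\<^sup>2 = (scale \<phi> * N \<phi>) * (p * A)"
    using trig by (simp add: A_def scale_eq_Q scale'_eq_Q power2_eq_square field_simps)
  also have "\<dots> \<le> M \<phi> * (p * A)"
    using scale_mult_N_le_M[OF \<phi>] A p_pos by (intro mult_right_mono) auto
  finally have N_term: "N \<phi> * (scale' \<phi>)\<^sup>2 \<le> M \<phi> * (p * A)" .
  have "scale' \<phi> \<le> 0"
    using trig c_pos p_pos by (simp add: scale'_eq_Q divide_nonneg_pos)
  then have middle_term: "0 \<le> scale' \<phi> * (- (sin \<phi> powr p / sqrt (1 + c)))"
    using c_pos by (intro mult_nonpos_nonpos) auto
  have "(p + 1) * A \<le> scale'' \<phi>"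
    using trig c_pos p_pos by (simp add: A_def scale''_eq_Q algebra_simps)
  then have M_term: "M \<phi> * ((p + 1) * A) \<le> M \<phi> * scale'' \<phi>"
    using M_nonneg[OF \<phi>] by (rule mult_left_mono)
  have "kappa_pos' \<phi> = -(1/2) * (N \<phi> * (scale' \<phi>)\<^sup>2) + scale' \<phi> * (- (sin \<phi> powr p / sqrt (1 + c)))
      + M \<phi> * scale'' \<phi>"
    by (simp add: kappa_pos'_def algebra_simps power2_eq_square)
  moreover have "A * M \<phi> \<le> -(1/2) * (M \<phi> * (p * A)) + M \<phi> * ((p + 1) * A)"
    using A M_nonneg[OF \<phi>] p_pos by (simp add: algebra_simps)
  ultimately have "A * M \<phi> \<le> kappa_pos' \<phi>"
    using N_term middle_term M_term by linarith
  then show ?thesis by (simp add: A_def)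
qed

lemma scale''_le:
  assumes \<phi>: "\<phi> \<in> {0<..<pi/2}"
  shows "scale'' \<phi> \<le> p * c * (Q \<phi>)\<^sup>2 * ((p + 2) / (sin \<phi>)\<^sup>2)"
proof -
  note trig = sin_cos_bounds[OF \<phi>]
  have "(p + 1) * (cos \<phi>)\<^sup>2 \<le> p + 1" using trig p_pos by (simp add: power_le_one mult_left_le)
  then have "(p + 1) * (cos \<phi>)\<^sup>2 / (sin \<phi>)\<^sup>2 \<le> (p + 1) / (sin \<phi>)\<^sup>2"
    by (rule divide_right_mono) simp
  moreover have "1 \<le> 1 / (sin \<phi>)\<^sup>2" using trig by (simp add: power_le_one)
  moreover have "(p + 2) / (sin \<phi>)\<^sup>2 = (p + 1) / (sin \<phi>)\<^sup>2 + 1 / (sin \<phi>)\<^sup>2"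
    by (simp add: add_divide_distrib[symmetric])
  ultimately have "(p + 1) * (cos \<phi>)\<^sup>2 / (sin \<phi>)\<^sup>2 + 1 \<le> (p + 2) / (sin \<phi>)\<^sup>2" by linarith
  then show ?thesis
    using trig c_pos p_pos by (simp only: scale''_eq_Q) (rule mult_left_mono, simp_all)
qed

lemma scale'_mult_sin_powr_le:
  assumes \<phi>: "\<phi> \<in> {0<..<pi/2}"
  shows "scale' \<phi> * (- (sin \<phi> powr p / sqrt (1 + c)))
    \<le> p * c / ((sin \<phi>)\<^sup>2 * sqrt (1 + c)) * Q \<phi>"
proof -
  note trig = sin_cos_bounds[OF \<phi>]
  have sqrt_pos: "0 < sqrt (1 + c)" using c_pos by simp
  have "scale' \<phi> * (- (sin \<phi> powr p / sqrt (1 + c)))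
      = p * c * cos \<phi> / (sin \<phi> * sqrt (1 + c)) * ((Q \<phi>)\<^sup>2 * sin \<phi> powr p)"
    using trig by (simp add: scale'_eq_Q field_simps)
  also have "\<dots> \<le> p * c / (sin \<phi> * sqrt (1 + c))"
    using trig c_pos p_pos by (simp add: Q_sq_mult_sin_powr divide_right_mono mult_left_le)
  also have "\<dots> \<le> p * c / ((sin \<phi>)\<^sup>2 * sqrt (1 + c))"
    using trig c_pos p_pos sqrt_pos
    by (intro divide_left_mono mult_right_mono) (auto simp: power2_eq_square mult_left_le)
  also have "\<dots> \<le> p * c / ((sin \<phi>)\<^sup>2 * sqrt (1 + c)) * Q \<phi>"
    using mult_left_mono[OF Q_ge_one[OF \<phi>], of "p * c / ((sin \<phi>)\<^sup>2 * sqrt (1 + c))"] trig c_pos p_pos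
    by simp
  finally show ?thesis .
qed

lemma kappa_pos'_le:
  assumes \<phi>: "\<phi> \<in> {0<..<pi/2}"
  shows "kappa_pos' \<phi> \<le> K3 * Q \<phi> / (sin \<phi>)\<^sup>2"
proof -
  note trig = sin_cos_bounds[OF \<phi>]
  have Q: "1 \<le> Q \<phi>" by (rule Q_ge_one[OF \<phi>])
  have N_term: "-(1/2) * N \<phi> * (scale' \<phi>)\<^sup>2 \<le> 0"
    using N_nonneg[OF \<phi>] by simp
  note middle_term = scale'_mult_sin_powr_le[OF \<phi>]
  have "0 \<le> scale'' \<phi>"
    using trig c_pos p_pos by (simp add: scale''_eq_Q)
  moreover note scale''_le[OF \<phi>]
  ultimately have "M \<phi> * scale'' \<phi> \<le> (K1 / Q \<phi>) * (p * c * (Q \<phi>)\<^sup>2 * ((p + 2) / (sin \<phi>)\<^sup>2))"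
    using M_le_Q[OF \<phi>] K1_pos Q by (intro mult_mono) auto
  also have "\<dots> = K1 * p * c * (p + 2) * Q \<phi> / (sin \<phi>)\<^sup>2"
    using Q by (simp add: power2_eq_square)
  finally have M_term: "M \<phi> * scale'' \<phi> \<le> K1 * p * c * (p + 2) * Q \<phi> / (sin \<phi>)\<^sup>2" .
  have "kappa_pos' \<phi> = -(1/2) * N \<phi> * (scale' \<phi>)\<^sup>2 + scale' \<phi> * (- (sin \<phi> powr p / sqrt (1 + c)))
      + M \<phi> * scale'' \<phi>"
    by (simp add: kappa_pos'_def algebra_simps power2_eq_square)
  moreover have "K3 * Q \<phi> / (sin \<phi>)\<^sup>2
      = p * c / ((sin \<phi>)\<^sup>2 * sqrt (1 + c)) * Q \<phi> + K1 * p * c * (p + 2) * Q \<phi> / (sin \<phi>)\<^sup>2"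
    using trig by (simp add: K3_def field_simps)
  ultimately show ?thesis using N_term middle_term M_term by linarith
qed

definition gap :: real where "gap = 2 * sqrt (1 + c) - 2"

lemma gap_pos: "0 < gap" unfolding gap_def using c_pos by simp

lemma kappa_pos_le: "\<phi> \<in> {0<..<pi/2} \<Longrightarrow> kappa_pos \<phi> \<le> -2 * sqrt (1 + c)"
  using excess_nonneg[of \<phi>] by (simp add: kappa_pos_eq_excess)

lemma kappa_pos_dist_le:
  "\<phi> \<in> {0<..<pi/2} \<Longrightarrow> \<bar>kappa_pos \<phi> - (-2 * sqrt (1 + c))\<bar> \<le> p * c * K1 * Q \<phi> * cos \<phi> / sin \<phi>"
  using excess_nonneg[of \<phi>] excess_le[of \<phi>] by (simp add: kappa_pos_eq_excess)

lemma kappa_pos_le_inverse: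
  assumes \<phi>: "\<phi> \<in> {0<..<pi/2}" "\<phi> \<le> pi/4"
  shows "kappa_pos \<phi> \<le> - K2 / \<phi>"
proof -
  have sin: "0 < sin \<phi>" "sin \<phi> \<le> \<phi>" using \<phi> by (auto intro: sin_gt_zero sin_x_le_x)
  have "K2 / \<phi> \<le> K2 / sin \<phi>"
    using sin K2_pos by (intro divide_left_mono) auto
  also have "\<dots> \<le> K2 * Q \<phi> / sin \<phi>"
    using sin K2_pos Q_ge_one[OF \<phi>(1)] by (intro divide_right_mono) auto
  also have "\<dots> \<le> excess \<phi>" by (rule excess_ge[OF \<phi>])
  moreover have "0 \<le> sqrt (1 + c)" using c_pos by simp
  ultimately show ?thesis unfolding kappa_pos_eq_excess by linarith
qed

lemma kappa_pos'_nonneg: "\<phi> \<in> {0<..<pi/2} \<Longrightarrow> 0 \<le> kappa_pos' \<phi>"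
  by (rule order_trans[OF _ kappa_pos'_ge]) (use M_nonneg c_pos p_pos in simp_all)

lemma kappa_pos'_le_cube:
  assumes \<phi>: "\<phi> \<in> {0<..<pi/2}" "\<phi> \<le> pi/4"
  shows "\<bar>kappa_pos' \<phi>\<bar> \<le> K3 / K2 ^ 3 * \<bar>2 + kappa_pos \<phi>\<bar> ^ 3"
proof -
  have "1 < sqrt (1 + c)" using c_pos by simp
  then have "excess \<phi> \<le> \<bar>2 + kappa_pos \<phi>\<bar>"
    using excess_nonneg[OF \<phi>(1)] unfolding kappa_pos_eq_excess by linarith
  then have "K2 * Q \<phi> / sin \<phi> \<le> \<bar>2 + kappa_pos \<phi>\<bar>"
    using excess_ge[OF \<phi>] by linarith
  from le_cube_of_bounds[OF K2_pos K3_pos Q_ge_one[OF \<phi>(1)] _ _ this kappa_pos'_le[OF \<phi>(1)]]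
  show ?thesis using sin_cos_bounds[OF \<phi>(1)] kappa_pos'_nonneg[OF \<phi>(1)] by simp
qed

lemma omega_numerator_pos:
  assumes \<phi>: "\<phi> \<in> {0<..<pi/2}" "\<phi> \<le> pi/6" and small: "sin \<phi> < K2 / gap"
  shows "0 < kappa_pos' \<phi> * cos \<phi> + (2 + kappa_pos \<phi>) * sin \<phi>"
proof -
  note trig = sin_cos_bounds[OF \<phi>(1)]
  define s where "s = sin \<phi>"
  define C where "C = cos \<phi>"
  have "s \<le> 1/2"
    using sin_monotone_2pi_le[of \<phi> "pi/6"] \<phi> by (auto simp: s_def sin_30)
  then have "s\<^sup>2 \<le> (1/2)\<^sup>2" using trig by (intro power_mono) (simp_all add: s_def)
  moreover have "C\<^sup>2 = 1 - s\<^sup>2" by (simp add: C_def s_def cos_squared_eq)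
  ultimately have "2 * s \<le> C\<^sup>2 / s" using trig by (simp add: s_def field_simps power2_eq_square)
  have excess_eq: "excess \<phi> = p * c * (Q \<phi>)\<^sup>2 * C * M \<phi> / s"
    using trig by (simp add: excess_eq_Q C_def s_def)
  have "excess \<phi> * (C\<^sup>2 / s) = (p * c * (Q \<phi>)\<^sup>2 * C\<^sup>2 / s\<^sup>2 * M \<phi>) * C"
    using trig by (simp add: excess_eq s_def field_simps power2_eq_square)
  also have "\<dots> \<le> kappa_pos' \<phi> * C"
    using kappa_pos'_ge[OF \<phi>(1)] trig by (intro mult_right_mono) (simp_all add: C_def s_def)
  finally have "2 * (excess \<phi> * s) \<le> kappa_pos' \<phi> * C"
    using mult_left_mono[OF \<open>2 * s \<le> C\<^sup>2 / s\<close> excess_nonneg[OF \<phi>(1)]] by simp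
  moreover have "(2 + kappa_pos \<phi>) * s = - gap * s - excess \<phi> * s"
    by (simp add: kappa_pos_eq_excess gap_def algebra_simps)
  moreover have "K2 \<le> excess \<phi> * s"
  proof -
    have "K2 \<le> K2 * Q \<phi>" using K2_pos Q_ge_one[OF \<phi>(1)] by simp
    also have "\<dots> \<le> excess \<phi> * s"
      using excess_ge[OF \<phi>(1)] \<phi> trig by (simp add: s_def pos_divide_le_eq)
    finally show ?thesis .
  qed
  moreover have "gap * s < K2" using small gap_pos by (simp add: s_def pos_less_divide_eq mult.commute)
  ultimately show ?thesis unfolding C_def s_def by linarith
qed

lemma kappa_pos_tendsto_at_bot: "filterlim kappa_pos at_bot (at_right 0)"
proof -
  have "LIM x at_right 0. K2 * inverse x :> at_top"
    by (rule filterlim_tendsto_pos_mult_at_top[OF tendsto_const K2_pos filterlim_inverse_at_top_right])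
  moreover have "eventually (\<lambda>x. x \<in> {0<..<pi/4}) (at_right (0::real))"
    by (rule eventually_at_right_real) simp
  then have "eventually (\<lambda>x. K2 * inverse x \<le> - kappa_pos x) (at_right 0)"
  proof eventually_elim
    case (elim x)
    then show ?case using kappa_pos_le_inverse[of x] by (simp add: field_simps)
  qed
  ultimately show ?thesis
    unfolding filterlim_uminus_at_bot by (rule filterlim_at_top_mono)
qed

lemma kappa_pos_tendsto_at_left: "(kappa_pos \<longlongrightarrow> -2 * sqrt (1 + c)) (at_left (pi/2))"
proof -
  let ?h = "\<lambda>\<phi>. p * c * K1 * Q \<phi> * cos \<phi> / sin \<phi>"
  have "(?h \<longlongrightarrow> ?h (pi/2)) (at_left (pi/2))"
    unfolding Q_def by (intro tendsto_intros) auto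
  then have h: "(?h \<longlongrightarrow> 0) (at_left (pi/2))" by simp
  have "eventually (\<lambda>\<phi>. \<phi> \<in> {0<..<pi/2}) (at_left (pi/2))"
    by (rule eventually_at_left_real) simp
  then have "eventually (\<lambda>\<phi>. norm (kappa_pos \<phi> - (-2 * sqrt (1 + c))) \<le> ?h \<phi>) (at_left (pi/2))"
    by eventually_elim (use kappa_pos_dist_le in auto)
  from Lim_null_comparison[OF this h] show ?thesis by (rule LIM_zero_cancel)
qed

section \<open>Identification with the rotation function\<close>

lemma inverse_deriv_sq_at_scaled:
  fixes \<beta> z0 :: real
  assumes \<beta>: "\<beta> > 0" and z0: "z0 > 0" and u: "0 < s" "s \<le> u" "u \<le> 1"
  defines "r \<equiv> \<lambda>z::real. z powr (-\<beta>)"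
  assumes p_eq: "p = 2 * (1 + \<beta>) / \<beta>" and c_eq: "c = \<beta> powr (-2) * r z0 powr (-p)"
  shows "inverse ((deriv r (inv_into {z0..} r (r z0 * s / u)))\<^sup>2) = c * (u / s) powr p"
proof -
  have r0: "r z0 > 0" using z0 by (simp add: r_def)
  have y: "0 < r z0 * s / u" "r z0 * s / u \<le> z0 powr (-\<beta>)"
    using u r0 by (auto simp: r_def field_simps intro!: mult_left_le)
  have "(r z0 * s / u) powr (-p) = r z0 powr (-p) * (u / s) powr p"
    using r0 u by (simp add: powr_mult powr_divide powr_minus field_simps)
  then show ?thesis
    using inverse_deriv_sq_at_inv_into_powr[OF \<beta> z0 y] by (simp add: c_eq p_eq r_def mult.assoc)
qed

lemma rotation_integral_eq_J:
  fixes \<beta> z0 :: real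
  assumes \<beta>: "\<beta> > 0" and z0: "z0 > 0" and \<phi>: "0 < \<phi>" "\<phi> < pi/2"
  defines "r \<equiv> \<lambda>z::real. z powr (-\<beta>)"
  assumes p_eq: "p = 2 * (1 + \<beta>) / \<beta>" and c_eq: "c = \<beta> powr (-2) * r z0 powr (-p)"
  shows "integral {sin \<phi>..1}
      (\<lambda>u. sqrt ((1 + inverse ((deriv r (inv_into {z0..} r (r z0 * sin \<phi> / u)))\<^sup>2)) / (1 - u\<^sup>2)))
    = J 0 (1/2) \<phi>"
proof -
  define s where "s = sin \<phi>"
  have s: "0 < s" "s \<le> 1" unfolding s_def using \<phi> by (auto intro: sin_gt_zero)
  define A where "A u = 1 + c * (u / s) powr p" for u
  have "integral {s..1} (\<lambda>u. sqrt ((1 + inverse ((deriv r (inv_into {z0..} r (r z0 * s / u)))\<^sup>2)) / (1 - u\<^sup>2)))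
      = integral {s..1} (\<lambda>u. sqrt (A u / (1 - u\<^sup>2)))"
    using inverse_deriv_sq_at_scaled[OF \<beta> z0 s(1) _ _ p_eq c_eq[unfolded r_def]]
    by (intro integral_cong) (simp add: A_def r_def)
  also have "\<dots> = integral {\<phi>..pi/2} (\<lambda>\<psi>. sqrt (A (sin \<psi>)))"
    unfolding s_def
    by (rule integral_sin_substitution[OF \<phi>])
       (use s c_pos in \<open>auto simp: A_def s_def intro!: continuous_intros add_nonneg_nonneg\<close>)
  also have "\<dots> = J 0 (1/2) \<phi>"
    unfolding J_def
  proof (rule integral_cong)
    fix \<psi> assume "\<psi> \<in> {\<phi>..pi/2}"
    then have "0 < sin \<psi>" using \<phi> by (intro sin_gt_zero_between[of \<phi>]) auto
    moreover have "(sin \<psi> / s) powr p = sin \<psi> powr p / s powr p"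
      using \<open>0 < sin \<psi>\<close> s by (simp add: powr_divide)
    ultimately have "A (sin \<psi>) = 1 + scale \<phi> * sin \<psi> powr p"
      using s by (simp add: A_def scale_def s_def powr_minus divide_inverse)
    then show "sqrt (A (sin \<psi>)) = integrand 0 (1/2) (scale \<phi>) \<psi>"
      using \<open>0 < sin \<psi>\<close> scale_pos_between[of \<phi>] \<phi>
      by (simp add: integrand_def powr_half_sqrt add_pos_nonneg)
  qed
  finally show ?thesis unfolding s_def .
qed

lemma rotation_fun_powr_eq:
  fixes \<beta> z0 :: real
  assumes "\<beta> > 0" "z0 > 0" "p = 2 * (1 + \<beta>) / \<beta>" "c = \<beta> powr (-2) * (z0 powr (-\<beta>)) powr (-p)"
    and \<phi>: "\<phi> \<in> {-pi/2<..<pi/2} - {0}"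
  shows "rotation_fun (\<lambda>z. z powr (-\<beta>)) z0 \<phi> = 2 * sgn \<phi> * J 0 (1/2) \<bar>\<phi>\<bar>"
proof -
  have "\<bar>sin \<phi>\<bar> = sin \<bar>\<phi>\<bar>" using \<phi> by (intro abs_sin_eq_sin_abs) auto
  moreover have "0 < \<bar>\<phi>\<bar>" "\<bar>\<phi>\<bar> < pi/2" using \<phi> by auto
  ultimately show ?thesis
    using rotation_integral_eq_J[OF assms(1,2) _ _ assms(3,4), of "\<bar>\<phi>\<bar>"]
    by (simp add: rotation_fun_def)
qed

end

section \<open>The derivative \<open>\<kappa>\<close> of the rotation function\<close>

locale trumpet_rotation = trumpet_integrals +
  fixes \<Delta> :: "real \<Rightarrow> real"
  assumes rotation_eq: "\<phi> \<in> {-pi/2<..<pi/2} - {0} \<Longrightarrow> \<Delta> \<phi> = 2 * sgn \<phi> * J 0 (1/2) \<bar>\<phi>\<bar>"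
begin

lemma has_real_derivative_rotation:
  assumes \<phi>: "\<phi> \<in> {-pi/2<..<pi/2} - {0}"
  shows "(\<Delta> has_real_derivative kappa_pos \<bar>\<phi>\<bar>) (at \<phi>)"
proof -
  have "\<bar>\<phi>\<bar> \<in> {0<..<pi/2}" "\<phi> \<noteq> 0" using \<phi> by auto
  have "((\<lambda>\<phi>. sgn \<phi> * (2 * J 0 (1/2) \<bar>\<phi>\<bar>)) has_real_derivative
      0 * (2 * J 0 (1/2) \<bar>\<phi>\<bar>) + kappa_pos \<bar>\<phi>\<bar> * sgn \<phi> * sgn \<phi>) (at \<phi>)"
    by (intro DERIV_mult has_real_derivative_sgn_abs(1) DERIV_chain2[OF has_real_derivative_two_J]
        has_real_derivative_sgn_abs(2)) fact+
  moreover have "0 * (2 * J 0 (1/2) \<bar>\<phi>\<bar>) + kappa_pos \<bar>\<phi>\<bar> * sgn \<phi> * sgn \<phi> = kappa_pos \<bar>\<phi>\<bar>"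
    using \<open>\<phi> \<noteq> 0\<close> by (simp add: sgn_if)
  ultimately have "((\<lambda>\<phi>. sgn \<phi> * (2 * J 0 (1/2) \<bar>\<phi>\<bar>)) has_real_derivative kappa_pos \<bar>\<phi>\<bar>) (at \<phi>)"
    by (rule DERIV_cong)
  then show ?thesis
    by (rule has_field_derivative_transform_within_open[where S="{-pi/2<..<pi/2} - {0}"])
       (use \<phi> rotation_eq in auto)
qed

lemma deriv_rotation: "\<phi> \<in> {-pi/2<..<pi/2} - {0} \<Longrightarrow> deriv \<Delta> \<phi> = kappa_pos \<bar>\<phi>\<bar>"
  by (rule DERIV_imp_deriv[OF has_real_derivative_rotation])

lemma has_real_derivative_deriv_rotation:
  assumes \<phi>: "\<phi> \<in> {-pi/2<..<pi/2} - {0}"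
  shows "(deriv \<Delta> has_real_derivative kappa_pos' \<bar>\<phi>\<bar> * sgn \<phi>) (at \<phi>)"
proof -
  have "\<bar>\<phi>\<bar> \<in> {0<..<pi/2}" "\<phi> \<noteq> 0" using \<phi> by auto
  have "((\<lambda>\<phi>. kappa_pos \<bar>\<phi>\<bar>) has_real_derivative kappa_pos' \<bar>\<phi>\<bar> * sgn \<phi>) (at \<phi>)"
    by (intro DERIV_chain2[OF has_real_derivative_kappa_pos] has_real_derivative_sgn_abs(2)) fact+
  then show ?thesis
    by (rule has_field_derivative_transform_within_open[where S="{-pi/2<..<pi/2} - {0}"])
       (use \<phi> deriv_rotation in auto)
qed

lemma smooth_on_deriv_rotation: "smooth_on ({-pi/2<..<pi/2} - {0}) (deriv \<Delta>)"
proof (rule Cinf_on_imp_smooth_on)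
  let ?S = "{-pi/2<..<pi/2::real} - {0}"
  have "Cinf_on ?S (\<lambda>\<phi>. kappa_pos \<bar>\<phi>\<bar>)"
    by (rule Cinf_on_compose[OF Cinf_on_abs Cinf_on_kappa_pos]) auto
  show "Cinf_on ?S (deriv \<Delta>)"
    by (rule Cinf_on_cong[OF _ \<open>Cinf_on ?S (\<lambda>\<phi>. kappa_pos \<bar>\<phi>\<bar>)\<close>]) (auto simp: deriv_rotation)
qed auto

lemma deriv_rotation_le: "\<phi> \<in> {-pi/2<..<pi/2} - {0} \<Longrightarrow> deriv \<Delta> \<phi> \<le> -2 * sqrt (1 + c)"
  using kappa_pos_le[of "\<bar>\<phi>\<bar>"] by (auto simp: deriv_rotation)

lemma rotation_differentiable: "\<phi> \<in> {-pi/2<..<pi/2} - {0} \<Longrightarrow> \<Delta> differentiable (at \<phi>)"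
  using has_real_derivative_rotation real_differentiable_def by blast

lemma deriv_rotation_less:
  assumes "\<phi> \<in> {-pi/2<..<pi/2} - {0}"
  shows "deriv \<Delta> \<phi> < -2" and "(2 + deriv \<Delta> \<phi>) / cos \<phi> < 0"
proof -
  have "1 < sqrt (1 + c)" using c_pos by simp
  then show "deriv \<Delta> \<phi> < -2" using deriv_rotation_le[OF assms] by linarith
  moreover have "0 < cos \<phi>" using assms by (intro cos_gt_zero_pi) auto
  ultimately show "(2 + deriv \<Delta> \<phi>) / cos \<phi> < 0" by (simp add: divide_neg_pos)
qed

lemma deriv_rotation_at_0: "eventually (\<lambda>\<phi>. kappa_pos \<bar>\<phi>\<bar> = deriv \<Delta> \<phi>) (at 0)"
  unfolding eventually_at
  by (rule exI[of _ "pi/2"]) (auto simp: dist_real_def intro!: deriv_rotation[symmetric])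

lemma deriv_rotation_tendsto_at_bot: "filterlim (deriv \<Delta>) at_bot (at 0)"
proof -
  have "filterlim abs (at_right 0) (at (0::real))"
    by (intro tendsto_imp_filterlim_at_right) (auto intro!: tendsto_eq_intros simp: eventually_at_filter)
  from filterlim_compose[OF kappa_pos_tendsto_at_bot this]
  show ?thesis by (rule filterlim_cong[OF refl refl deriv_rotation_at_0, THEN iffD1])
qed

lemma deriv_rotation_tendsto_at_left: "(deriv \<Delta> \<longlongrightarrow> -2 * sqrt (1 + c)) (at_left (pi/2))"
proof -
  have "eventually (\<lambda>\<phi>. \<phi> \<in> {0<..<pi/2}) (at_left (pi/2))"
    by (rule eventually_at_left_real) simp
  then have "eventually (\<lambda>\<phi>. kappa_pos \<phi> = deriv \<Delta> \<phi>) (at_left (pi/2))"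
    by eventually_elim (auto simp: deriv_rotation)
  from filterlim_cong[OF refl refl this] show ?thesis
    using kappa_pos_tendsto_at_left by simp
qed

lemma deriv_rotation_tendsto_at_right: "(deriv \<Delta> \<longlongrightarrow> -2 * sqrt (1 + c)) (at_right (-pi/2))"
proof -
  have "eventually (\<lambda>\<phi>. \<phi> \<in> {0<..<pi/2}) (at_left (pi/2))"
    by (rule eventually_at_left_real) simp
  then have "eventually (\<lambda>\<phi>. kappa_pos \<phi> = deriv \<Delta> (-\<phi>)) (at_left (pi/2))"
    by eventually_elim (auto simp: deriv_rotation)
  from filterlim_cong[OF refl refl this] have "((\<lambda>\<phi>. deriv \<Delta> (-\<phi>)) \<longlongrightarrow> -2 * sqrt (1 + c)) (at_left (pi/2))"
    using kappa_pos_tendsto_at_left by simp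
  then show ?thesis
    by (simp add: at_right_minus filterlim_filtermap)
qed

lemma deriv_deriv_rotation_bigo:
  "(\<lambda>\<phi>. \<bar>deriv (deriv \<Delta>) \<phi>\<bar>) \<in> O[at 0](\<lambda>\<phi>. \<bar>2 + deriv \<Delta> \<phi>\<bar> ^ 3)"
proof (rule bigoI)
  show "eventually (\<lambda>\<phi>. norm \<bar>deriv (deriv \<Delta>) \<phi>\<bar> \<le> K3 / K2 ^ 3 * norm (\<bar>2 + deriv \<Delta> \<phi>\<bar> ^ 3)) (at 0)"
    unfolding eventually_at
  proof (intro exI[of _ "pi/4"] conjI ballI impI)
    fix \<phi> :: real assume "\<phi> \<noteq> 0 \<and> dist \<phi> 0 < pi/4"
    then have \<phi>: "\<phi> \<in> {-pi/2<..<pi/2} - {0}" "\<bar>\<phi>\<bar> \<in> {0<..<pi/2}" "\<bar>\<phi>\<bar> \<le> pi/4" by auto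
    have "\<bar>deriv (deriv \<Delta>) \<phi>\<bar> = \<bar>kappa_pos' \<bar>\<phi>\<bar>\<bar>"
      using DERIV_imp_deriv[OF has_real_derivative_deriv_rotation[OF \<phi>(1)]] \<phi>(1)
      by (simp add: abs_mult)
    then show "norm \<bar>deriv (deriv \<Delta>) \<phi>\<bar> \<le> K3 / K2 ^ 3 * norm (\<bar>2 + deriv \<Delta> \<phi>\<bar> ^ 3)"
      using kappa_pos'_le_cube[OF \<phi>(2,3)] deriv_rotation[OF \<phi>(1)] by (simp add: power_abs)
  qed simp
qed

lemma has_real_derivative_omega_pos:
  assumes t: "0 < t" "t \<le> pi/6" "t < K2 / gap"
  shows "\<exists>D. ((\<lambda>\<phi>. (2 + deriv \<Delta> \<phi>) / cos \<phi>) has_real_derivative D) (at t) \<and> 0 < D"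
proof (intro exI conjI)
  have V: "t \<in> {0<..<pi/2}" and S: "t \<in> {-pi/2<..<pi/2} - {0}" using t by auto
  have "0 < cos t" using sin_cos_bounds[OF V] by simp
  then show "((\<lambda>\<phi>. (2 + deriv \<Delta> \<phi>) / cos \<phi>) has_real_derivative
      (kappa_pos' t * cos t + (2 + kappa_pos t) * sin t) / (cos t)\<^sup>2) (at t)"
    using has_real_derivative_deriv_rotation[OF S] deriv_rotation[OF S] t
    by (auto intro!: derivative_eq_intros simp: power2_eq_square)
  have "sin t \<le> t" using t by (intro sin_x_le_x) auto
  then show "0 < (kappa_pos' t * cos t + (2 + kappa_pos t) * sin t) / (cos t)\<^sup>2"
    using omega_numerator_pos[OF V t(2)] t \<open>0 < cos t\<close> by simp
qed

lemma omega_monotone_near_0: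
  defines "\<omega> \<equiv> \<lambda>\<phi>. (2 + deriv \<Delta> \<phi>) / cos \<phi>"
  shows "\<exists>\<epsilon>>0. antimono_on {-\<epsilon>..<0} \<omega> \<and> mono_on {0<..\<epsilon>} \<omega>"
proof -
  define \<epsilon> where "\<epsilon> = min (pi/6) (K2 / (2 * gap))"
  have \<epsilon>: "0 < \<epsilon>" "\<epsilon> \<le> pi/6" "\<epsilon> < K2 / gap"
    using K2_pos gap_pos by (auto simp: \<epsilon>_def min_less_iff_disj field_simps)
  have mono: "mono_on {0<..\<epsilon>} \<omega>"
  proof (rule mono_onI)
    fix x y assume x: "x \<in> {0<..\<epsilon>}" and y: "y \<in> {0<..\<epsilon>}" and "x \<le> y"
    show "\<omega> x \<le> \<omega> y"
    proof (cases "x = y")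
      case False
      with \<open>x \<le> y\<close> have "x < y" by simp
      have "\<omega> x < \<omega> y"
      proof (rule DERIV_pos_imp_increasing[OF \<open>x < y\<close>])
        fix t assume "x \<le> t" "t \<le> y"
        then have "0 < t" "t \<le> pi/6" "t < K2 / gap" using x y \<epsilon> by auto
        from has_real_derivative_omega_pos[OF this]
        show "\<exists>D. (\<omega> has_real_derivative D) (at t) \<and> 0 < D" unfolding \<omega>_def .
      qed
      then show ?thesis by simp
    qed simp
  qed
  have "antimono_on {-\<epsilon>..<0} \<omega>"
    unfolding monotone_on_def
  proof (intro ballI impI)
    fix x y assume "x \<in> {-\<epsilon>..<0}" "y \<in> {-\<epsilon>..<0}" "x \<le> y"
    moreover have "\<omega> (-x) = \<omega> x" "\<omega> (-y) = \<omega> y"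
      using calculation \<epsilon> by (auto simp: \<omega>_def deriv_rotation)
    ultimately show "\<omega> y \<le> \<omega> x"
      using mono_onD[OF mono, of "-y" "-x"] by auto
  qed
  with mono \<epsilon>(1) show ?thesis by blast
qed

end

theorem mainTheorem9:
  fixes \<beta> z0 :: real
  assumes "\<beta> > 0" and "z0 > 0"
  defines "r \<equiv> (\<lambda>z::real. z powr (-\<beta>))"
  defines "r0 \<equiv> r z0"
  defines "\<Delta>\<theta> \<equiv> rotation_fun r z0"
  defines "\<kappa> \<equiv> deriv \<Delta>\<theta>"
  defines "\<omega> \<equiv> (\<lambda>\<phi>. (2 + \<kappa> \<phi>) / cos \<phi>)"
  defines "L \<equiv> -2 * sqrt (1 + \<beta> powr (-2) * r0 powr (-2 * (1 + \<beta>) / \<beta>))"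
  shows
    "(\<forall>\<phi>\<in>{-pi/2<..<pi/2} - {0}. \<Delta>\<theta> differentiable (at \<phi>))
     \<and> smooth_on ({-pi/2<..<pi/2} - {0}) \<kappa>
     \<and> (\<forall>\<phi>\<in>{-pi/2<..<pi/2} - {0}. \<kappa> \<phi> \<le> L)
     \<and> L < -2
     \<and> (\<forall>\<phi>\<in>{-pi/2<..<pi/2} - {0}. \<kappa> \<phi> \<notin> {-2..0} \<and> \<omega> \<phi> < 0)
     \<and> filterlim \<kappa> at_bot (at 0)
     \<and> (\<kappa> \<longlongrightarrow> L) (at_left (pi/2))
     \<and> (\<kappa> \<longlongrightarrow> L) (at_right (-pi/2))
     \<and> (\<lambda>\<phi>. \<bar>deriv \<kappa> \<phi>\<bar>) \<in> O[at 0](\<lambda>\<phi>. \<bar>2 + \<kappa> \<phi>\<bar> ^ 3)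
     \<and> (\<exists>\<epsilon>>0. (mono_on {-\<epsilon>..<0} \<omega> \<or> antimono_on {-\<epsilon>..<0} \<omega>)
               \<and> (mono_on {0<..\<epsilon>} \<omega> \<or> antimono_on {0<..\<epsilon>} \<omega>))"
proof -
  define p where "p = 2 * (1 + \<beta>) / \<beta>"
  define c where "c = \<beta> powr (-2) * r0 powr (-p)"
  have "0 < c" "0 < p" using assms(1,2) by (simp_all add: c_def p_def r0_def r_def)
  interpret trumpet_integrals c p by unfold_locales fact+
  interpret trumpet_rotation c p \<Delta>\<theta>
    by unfold_locales
      (use rotation_fun_powr_eq[OF assms(1,2) p_def] in \<open>simp add: \<Delta>\<theta>_def c_def r0_def r_def\<close>)
  have "-2 * (1 + \<beta>) / \<beta> = -p" by (simp add: p_def minus_divide_left)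
  then have L_eq: "L = -2 * sqrt (1 + c)" by (simp add: L_def c_def)
  have "-2 * sqrt (1 + c) < -2" using c_pos by simp
  moreover have "\<exists>\<epsilon>>0. antimono_on {-\<epsilon>..<0} \<omega> \<and> mono_on {0<..\<epsilon>} \<omega>"
    unfolding \<omega>_def \<kappa>_def by (rule omega_monotone_near_0)
  ultimately show ?thesis
    using rotation_differentiable smooth_on_deriv_rotation deriv_rotation_le deriv_rotation_less
      deriv_rotation_tendsto_at_bot deriv_rotation_tendsto_at_left deriv_rotation_tendsto_at_right
      deriv_deriv_rotation_bigo
    unfolding \<kappa>_def \<omega>_def L_eq by fastforce
qed

end
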